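(* Let $\kappa \geq 2$ be an integer. If there exists a finite projective plane of order $\kappa$, then there exists a complete set of $\kappa - 1$ mutually projective Latin squares of order $\kappa$.
   Context: A geometry is a pair $(\mathcal{P},\mathcal{L})$ of disjoint sets, the elements of $\mathcal{L}$ (lines) being subsets of $\mathcal{P}$ (points), such that every two distinct points lie in exactly one common line and every line contains at least two points. A finite projective plane is a finite geometry in which any two different lines intersect and which contains at least four points no three of which lie on a common line. In a finite projective plane all lines have the same number $k$ of points; the order of the plane is $\kappa = k - 1$. A Latin square of order $\kappa$ is a $\kappa\times\kappa$ matrix with entries from $\{1,\dots,\kappa\}$ in which each symbol occurs exactly once in each row and each column. Two Latin squares $L_1=[l^{(1)}_{ij}]$ and $L_2=[l^{(2)}_{ij}]$ of order $\kappa$ are called projective if both have all diagonal entries equal to $1$ and, for every row index $r$ and every row index $s$, there is exactly one column index $c$ with $l^{(1)}_{rc} = l^{(2)}_{sc}$. A family of Latin squares of order $\kappa$ is a set of mutually projective Latin squares (MPLS) if its members are pairwise projective; such a set is complete if it contains $\kappa - 1$ Latin squares. *)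

theory Defs
  imports Main
begin

definition geometry :: "'a set \<Rightarrow> 'a set set \<Rightarrow> bool" where
  "geometry P L \<longleftrightarrow>
     (\<forall>l\<in>L. l \<subseteq> P \<and> (\<exists>a b. a \<noteq> b \<and> a \<in> l \<and> b \<in> l)) \<and>
     (\<forall>p\<in>P. \<forall>q\<in>P. p \<noteq> q \<longrightarrow> (\<exists>!l. l \<in> L \<and> p \<in> l \<and> q \<in> l))"

definition finite_projective_plane :: "'a set \<Rightarrow> 'a set set \<Rightarrow> bool" where
  "finite_projective_plane P L \<longleftrightarrow>
     geometry P L \<and> finite P \<and> finite L \<and>
     (\<forall>l\<in>L. \<forall>m\<in>L. l \<noteq> m \<longrightarrow> l \<inter> m \<noteq> {}) \<and>
     (\<exists>Q. Q \<subseteq> P \<and> card Q = 4 \<and> (\<forall>l\<in>L. card (Q \<inter> l) \<le> 2))"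

definition plane_order :: "'a set \<Rightarrow> 'a set set \<Rightarrow> nat \<Rightarrow> bool" where
  "plane_order P L \<kappa> \<longleftrightarrow> (\<forall>l\<in>L. card l = \<kappa> + 1)"

text \<open>A Latin square of order \<kappa> is a function on index pairs in {1..\<kappa>}\<times>{1..\<kappa>}
  with values in {1..\<kappa>}; by convention it is 0 outside the index range, so that
  equal squares are equal functions.\<close>
definition latin_square :: "nat \<Rightarrow> (nat \<Rightarrow> nat \<Rightarrow> nat) \<Rightarrow> bool" where
  "latin_square \<kappa> M \<longleftrightarrow>
     (\<forall>i j. (i \<notin> {1..\<kappa>} \<or> j \<notin> {1..\<kappa>}) \<longrightarrow> M i j = 0) \<and>
     (\<forall>i\<in>{1..\<kappa>}. \<forall>j\<in>{1..\<kappa>}. M i j \<in> {1..\<kappa>}) \<and>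
     (\<forall>i\<in>{1..\<kappa>}. \<forall>s\<in>{1..\<kappa>}. \<exists>!j. j \<in> {1..\<kappa>} \<and> M i j = s) \<and>
     (\<forall>j\<in>{1..\<kappa>}. \<forall>s\<in>{1..\<kappa>}. \<exists>!i. i \<in> {1..\<kappa>} \<and> M i j = s)"

definition projective_pair :: "nat \<Rightarrow> (nat \<Rightarrow> nat \<Rightarrow> nat) \<Rightarrow> (nat \<Rightarrow> nat \<Rightarrow> nat) \<Rightarrow> bool" where
  "projective_pair \<kappa> M1 M2 \<longleftrightarrow>
     (\<forall>i\<in>{1..\<kappa>}. M1 i i = 1) \<and> (\<forall>i\<in>{1..\<kappa>}. M2 i i = 1) \<and>
     (\<forall>r\<in>{1..\<kappa>}. \<forall>s\<in>{1..\<kappa>}. \<exists>!c. c \<in> {1..\<kappa>} \<and> M1 r c = M2 s c)"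

definition MPLS :: "nat \<Rightarrow> (nat \<Rightarrow> nat \<Rightarrow> nat) set \<Rightarrow> bool" where
  "MPLS \<kappa> S \<longleftrightarrow>
     (\<forall>M\<in>S. latin_square \<kappa> M) \<and>
     (\<forall>M1\<in>S. \<forall>M2\<in>S. M1 \<noteq> M2 \<longrightarrow> projective_pair \<kappa> M1 M2)"

definition complete_MPLS :: "nat \<Rightarrow> (nat \<Rightarrow> nat \<Rightarrow> nat) set \<Rightarrow> bool" where
  "complete_MPLS \<kappa> S \<longleftrightarrow> MPLS \<kappa> S \<and> finite S \<and> card S = \<kappa> - 1"

end

theory Submission
  imports Defs
begin

text \<open>Fix a line \<open>\<ell>\<close> of the plane. For each point \<open>E\<close> of \<open>\<ell>\<close>, the \<open>\<kappa>\<close> lines through \<open>E\<close>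
  other than \<open>\<ell>\<close> partition the \<open>\<kappa>\<^sup>2\<close> affine points, and two such lines through different
  points of \<open>\<ell>\<close> meet in exactly one affine point. Labelling each pencil by \<open>1..\<kappa>\<close> gives an
  orthogonal array: \<open>\<kappa> + 1\<close> columns indexed by the points of \<open>\<ell>\<close>, rows indexed by the affine
  points, in which any two columns determine a row. Relabelling symbols column by column makes
  the array normalized with respect to two columns \<open>V\<close> and \<open>H\<close>. Each of the remaining
  \<open>\<kappa> - 1\<close> columns \<open>D\<close> yields the Latin square whose \<open>(i, j)\<close> entry is the \<open>H\<close>-entry of the row
  with \<open>D\<close>-entry \<open>i\<close> and \<open>V\<close>-entry \<open>j\<close>; normalization puts \<open>1\<close> on its diagonal, and two such
  squares are projective because two columns again determine a row.\<close>

locale orthogonal_array =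
  fixes \<kappa> :: nat and R :: "'r set" and C :: "'c set" and f :: "'c \<Rightarrow> 'r \<Rightarrow> nat"
  assumes entry_range: "E \<in> C \<Longrightarrow> p \<in> R \<Longrightarrow> f E p \<in> {1..\<kappa>}"
    and ex1_row: "E \<in> C \<Longrightarrow> F \<in> C \<Longrightarrow> E \<noteq> F \<Longrightarrow> i \<in> {1..\<kappa>} \<Longrightarrow> j \<in> {1..\<kappa>}
      \<Longrightarrow> \<exists>!p. p \<in> R \<and> f E p = i \<and> f F p = j"
begin

definition row :: "'c \<Rightarrow> 'c \<Rightarrow> nat \<Rightarrow> nat \<Rightarrow> 'r" where
  "row E F i j = (THE p. p \<in> R \<and> f E p = i \<and> f F p = j)"

lemma row:
  assumes "E \<in> C" "F \<in> C" "E \<noteq> F" "i \<in> {1..\<kappa>}" "j \<in> {1..\<kappa>}"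
  shows "row E F i j \<in> R" "f E (row E F i j) = i" "f F (row E F i j) = j"
  using theI'[OF ex1_row[OF assms]] unfolding row_def by auto

lemma row_unique:
  assumes "E \<in> C" "F \<in> C" "E \<noteq> F" "p \<in> R" "q \<in> R" "f E p = f E q" "f F p = f F q"
  shows "p = q"
proof -
  note ex1 = ex1_row[OF assms(1-3) entry_range[OF assms(1,4)] entry_range[OF assms(2,4)]]
  show ?thesis
    using the1_equality[OF ex1, of p] the1_equality[OF ex1, of q] assms(4-7) by simp
qed

lemma row_eq:
  assumes "E \<in> C" "F \<in> C" "E \<noteq> F" "p \<in> R" "f E p = i" "f F p = j"
  shows "row E F i j = p"
proof -
  have "i \<in> {1..\<kappa>}" "j \<in> {1..\<kappa>}" using assms entry_range by auto
  from row[OF assms(1-3) this] show ?thesis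
    using row_unique[OF assms(1-3) _ assms(4)] assms(5,6) by simp
qed

lemma row_swap:
  assumes "E \<in> C" "F \<in> C" "E \<noteq> F" "i \<in> {1..\<kappa>}" "j \<in> {1..\<kappa>}"
  shows "row F E j i = row E F i j"
  using row[OF assms] row_eq[OF assms(2,1) assms(3)[symmetric]] by metis

lemma ex1_third_entry:
  assumes "A \<in> C" "B \<in> C" "G \<in> C" "A \<noteq> B" "A \<noteq> G" "B \<noteq> G"
    and a: "a \<in> {1..\<kappa>}" and s: "s \<in> {1..\<kappa>}"
  shows "\<exists>!b. b \<in> {1..\<kappa>} \<and> f G (row A B a b) = s"
proof (rule ex1I)
  define p where "p = row A G a s"
  have p: "p \<in> R" "f A p = a" "f G p = s"
    using row[OF assms(1,3,5) a s] by (simp_all add: p_def)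
  show "f B p \<in> {1..\<kappa>} \<and> f G (row A B a (f B p)) = s"
    using entry_range[OF assms(2) p(1)] row_eq[OF assms(1,2,4) p(1,2)] p(3) by simp
  fix b assume b: "b \<in> {1..\<kappa>} \<and> f G (row A B a b) = s"
  then have "row A B a b = p"
    using row[OF assms(1,2,4) a] row_eq[OF assms(1,3,5)] p_def by metis
  then show "b = f B p"
    using row(3)[OF assms(1,2,4) a] b by metis
qed

definition square :: "'c \<Rightarrow> 'c \<Rightarrow> 'c \<Rightarrow> nat \<Rightarrow> nat \<Rightarrow> nat" where
  "square V H D i j = (if i \<in> {1..\<kappa>} \<and> j \<in> {1..\<kappa>} then f H (row D V i j) else 0)"

lemma latin_square_square:
  assumes "V \<in> C" "H \<in> C" "D \<in> C" "V \<noteq> H" "D \<noteq> V" "D \<noteq> H"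
  shows "latin_square \<kappa> (square V H D)"
  unfolding latin_square_def
proof (intro conjI ballI allI impI)
  fix i j assume "i \<notin> {1..\<kappa>} \<or> j \<notin> {1..\<kappa>}"
  then have "\<not> (i \<in> {1..\<kappa>} \<and> j \<in> {1..\<kappa>})" by blast
  then show "square V H D i j = 0" unfolding square_def by (rule if_not_P)
next
  fix i j assume ij: "i \<in> {1..\<kappa>}" "j \<in> {1..\<kappa>}"
  then show "square V H D i j \<in> {1..\<kappa>}"
    using entry_range[OF assms(2) row(1)[OF assms(3,1,5) ij]] by (simp add: square_def)
next
  fix i s assume i: "i \<in> {1..\<kappa>}" and s: "s \<in> {1..\<kappa>}"
  have eq: "j \<in> {1..\<kappa>} \<and> square V H D i j = s \<longleftrightarrow> j \<in> {1..\<kappa>} \<and> f H (row D V i j) = s" for j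
    using i by (auto simp: square_def)
  show "\<exists>!j. j \<in> {1..\<kappa>} \<and> square V H D i j = s"
    unfolding eq by (rule ex1_third_entry[OF assms(3,1,2) assms(5,6,4) i s])
next
  fix j s assume j: "j \<in> {1..\<kappa>}" and s: "s \<in> {1..\<kappa>}"
  have eq: "i \<in> {1..\<kappa>} \<and> square V H D i j = s \<longleftrightarrow> i \<in> {1..\<kappa>} \<and> f H (row V D j i) = s" for i
    using row_swap[of D V i j] assms j by (auto simp: square_def)
  show "\<exists>!i. i \<in> {1..\<kappa>} \<and> square V H D i j = s"
    unfolding eq
    by (rule ex1_third_entry[OF assms(1,3,2) assms(5)[symmetric] assms(4) assms(6) j s])
qed

lemma common_column_eq:
  assumes V: "V \<in> C" and H: "H \<in> C" "V \<noteq> H"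
    and D: "D \<in> C - {V, H}" and D': "D' \<in> C - {V, H}" and "D \<noteq> D'"
    and r: "r \<in> {1..\<kappa>}" and s: "s \<in> {1..\<kappa>}" and c: "c \<in> {1..\<kappa>}"
    and same_entry: "square V H D r c = square V H D' s c"
  shows "c = f V (row D D' r s)"
proof -
  have DD': "D \<in> C" "D' \<in> C" "D \<noteq> V" "D' \<noteq> V" using D D' by auto
  define q where "q = row D V r c"
  define q' where "q' = row D' V s c"
  have q: "q \<in> R" "f D q = r" "f V q = c" and q': "q' \<in> R" "f D' q' = s" "f V q' = c"
    using row[OF DD'(1) V DD'(3) r c] row[OF DD'(2) V DD'(4) s c] by (simp_all add: q_def q'_def)
  have "f H q = f H q'"
    using same_entry c r s by (simp add: square_def q_def q'_def)
  then have "q = q'"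
    using row_unique[OF V H q(1) q'(1)] q(3) q'(3) by simp
  then have "row D D' r s = q"
    using row_eq[OF DD'(1,2) \<open>D \<noteq> D'\<close> q(1,2)] q'(2) by simp
  then show ?thesis using q(3) by simp
qed

lemma ex1_common_column:
  assumes V: "V \<in> C" and H: "H \<in> C" "V \<noteq> H"
    and D: "D \<in> C - {V, H}" and D': "D' \<in> C - {V, H}" and "D \<noteq> D'"
    and r: "r \<in> {1..\<kappa>}" and s: "s \<in> {1..\<kappa>}"
  shows "\<exists>!c. c \<in> {1..\<kappa>} \<and> square V H D r c = square V H D' s c"
proof (rule ex1I)
  have DD': "D \<in> C" "D' \<in> C" "D \<noteq> V" "D' \<noteq> V" using D D' by auto
  define p where "p = row D D' r s"
  have p: "p \<in> R" "f D p = r" "f D' p = s"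
    using row[OF DD'(1,2) \<open>D \<noteq> D'\<close> r s] by (simp_all add: p_def)
  show "f V p \<in> {1..\<kappa>} \<and> square V H D r (f V p) = square V H D' s (f V p)"
    using entry_range[OF V p(1)] row_eq[OF DD'(1) V DD'(3) p(1,2)] row_eq[OF DD'(2) V DD'(4) p(1,3)]
      r s by (simp add: square_def)
  show "c = f V p" if "c \<in> {1..\<kappa>} \<and> square V H D r c = square V H D' s c" for c
    using common_column_eq[OF assms] that p_def by blast
qed

lemma inj_on_square:
  assumes "\<kappa> \<ge> 2" "V \<in> C" "H \<in> C" "V \<noteq> H"
  shows "inj_on (square V H) (C - {V, H})"
proof (rule inj_onI, rule ccontr)
  fix D D' assume D: "D \<in> C - {V, H}" and D': "D' \<in> C - {V, H}"
    and eq: "square V H D = square V H D'" and "D \<noteq> D'"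
  have one: "1 \<in> {1..\<kappa>}" and two: "2 \<in> {1..\<kappa>}" using assms(1) by auto
  note common_column = common_column_eq[OF assms(2-4) D D' \<open>D \<noteq> D'\<close> one one]
  have "1 = f V (row D D' 1 1)" "2 = f V (row D D' 1 1)"
    using common_column[OF one] common_column[OF two] by (simp_all only: eq)
  then show False by simp
qed

lemma orthogonal_array_relabel:
  assumes g: "\<And>D. D \<in> C \<Longrightarrow> bij_betw (g D) {1..\<kappa>} {1..\<kappa>}"
  shows "orthogonal_array \<kappa> R C (\<lambda>D p. g D (f D p))"
proof
  fix E p assume "E \<in> C" "p \<in> R"
  then show "g E (f E p) \<in> {1..\<kappa>}" using g entry_range bij_betw_apply by metis
next
  fix E F i j assume EF: "E \<in> C" "F \<in> C" "E \<noteq> F" and ij: "i \<in> {1..\<kappa>}" "j \<in> {1..\<kappa>}"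
  have unlabel: "g D (f D p) = k \<longleftrightarrow> f D p = inv_into {1..\<kappa>} (g D) k"
    if "D \<in> C" "p \<in> R" "k \<in> {1..\<kappa>}" for D p k
    using that g[OF that(1)] entry_range[OF that(1,2)]
    by (metis bij_betw_inv_into_left bij_betw_inv_into_right)
  have "inv_into {1..\<kappa>} (g D) k \<in> {1..\<kappa>}" if "D \<in> C" "k \<in> {1..\<kappa>}" for D k
    using that g bij_betw_apply bij_betw_inv_into by metis
  note ex1 = ex1_row[OF EF this[OF EF(1) ij(1)] this[OF EF(2) ij(2)]]
  have relabelled: "p \<in> R \<and> g E (f E p) = i \<and> g F (f F p) = j \<longleftrightarrow>
      p \<in> R \<and> f E p = inv_into {1..\<kappa>} (g E) i \<and> f F p = inv_into {1..\<kappa>} (g F) j" for p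
    using unlabel[OF EF(1) _ ij(1)] unlabel[OF EF(2) _ ij(2)] by blast
  show "\<exists>!p. p \<in> R \<and> g E (f E p) = i \<and> g F (f F p) = j"
    unfolding relabelled by (rule ex1)
qed

end

locale normalized_orthogonal_array = orthogonal_array +
  fixes V H
  assumes V: "V \<in> C" and H: "H \<in> C" and V_ne_H: "V \<noteq> H"
    and normalized: "i \<in> {1..\<kappa>} \<Longrightarrow> \<exists>p\<in>R. f V p = i \<and> f H p = 1 \<and> (\<forall>D\<in>C - {V, H}. f D p = i)"
begin

lemma square_diag:
  assumes "D \<in> C - {V, H}" "i \<in> {1..\<kappa>}"
  shows "square V H D i i = 1"
proof -
  obtain p where "p \<in> R" "f V p = i" "f H p = 1" "f D p = i"
    using normalized[OF assms(2)] assms(1) by blast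
  then show ?thesis
    using row_eq[of D V p i i] assms V by (auto simp: square_def)
qed

theorem ex_complete_MPLS:
  assumes "\<kappa> \<ge> 2" "finite C" "card C = \<kappa> + 1"
  shows "\<exists>S. complete_MPLS \<kappa> S"
proof -
  define S where "S = square V H ` (C - {V, H})"
  have "card S = card (C - {V, H})"
    using inj_on_square[OF assms(1) V H V_ne_H] card_image S_def by blast
  also have "\<dots> = \<kappa> - 1"
    using assms(2,3) V H V_ne_H by (simp add: card_Diff_subset)
  finally have "card S = \<kappa> - 1" .
  moreover have "MPLS \<kappa> S"
    unfolding MPLS_def
  proof (intro conjI ballI impI)
    fix M assume "M \<in> S"
    then show "latin_square \<kappa> M"
      using latin_square_square V H V_ne_H by (auto simp: S_def)
  next
    fix M M' assume "M \<in> S" "M' \<in> S" "M \<noteq> M'"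
    then obtain D D' where D: "D \<in> C - {V, H}" and D': "D' \<in> C - {V, H}" and "D \<noteq> D'"
      and "M = square V H D" "M' = square V H D'"
      unfolding S_def by blast
    then show "projective_pair \<kappa> M M'"
      unfolding projective_pair_def
      using square_diag ex1_common_column[OF V H V_ne_H D D'] by simp
  qed
  ultimately show ?thesis
    using assms(2) S_def unfolding complete_MPLS_def by blast
qed

end

lemma (in orthogonal_array) ex_normalized:
  assumes V: "V \<in> C" and H: "H \<in> C" and "V \<noteq> H"
  shows "\<exists>g. normalized_orthogonal_array \<kappa> R C g V H"
proof -
  define \<sigma> where "\<sigma> D v = (if D \<in> {V, H} then v else f V (row H D 1 v))" for D v
  have "bij_betw (\<sigma> D) {1..\<kappa>} {1..\<kappa>}" if D: "D \<in> C" for D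
  proof (cases "D \<in> {V, H}")
    case True
    then have "\<sigma> D = id" by (auto simp: \<sigma>_def)
    then show ?thesis by simp
  next
    case False
    have into: "\<sigma> D v \<in> {1..\<kappa>}" if "v \<in> {1..\<kappa>}" for v
      using False that H D row(1)[of H D 1 v] entry_range[OF V] by (auto simp: \<sigma>_def)
    have "H \<noteq> D" using False by auto
    have "inj_on (\<sigma> D) {1..\<kappa>}"
    proof (rule inj_onI)
      fix v w assume v: "v \<in> {1..\<kappa>}" and w: "w \<in> {1..\<kappa>}" and "\<sigma> D v = \<sigma> D w"
      then have one: "1 \<in> {1..\<kappa>}" by simp
      note rv = row[OF H D \<open>H \<noteq> D\<close> one v] and rw = row[OF H D \<open>H \<noteq> D\<close> one w]
      have "f V (row H D 1 v) = f V (row H D 1 w)"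
        using \<open>\<sigma> D v = \<sigma> D w\<close> False by (simp add: \<sigma>_def)
      then have "row H D 1 v = row H D 1 w"
        using row_unique[OF V H \<open>V \<noteq> H\<close> rv(1) rw(1)] rv(2) rw(2) by simp
      then show "v = w" using rv(3) rw(3) by simp
    qed
    moreover have "\<sigma> D ` {1..\<kappa>} = {1..\<kappa>}"
      using endo_inj_surj[of "{1..\<kappa>}" "\<sigma> D"] into calculation by blast
    ultimately show ?thesis by (simp add: bij_betw_def)
  qed
  then have relabelled: "orthogonal_array \<kappa> R C (\<lambda>D p. \<sigma> D (f D p))"
    by (rule orthogonal_array_relabel)
  have "\<exists>p\<in>R. \<sigma> V (f V p) = i \<and> \<sigma> H (f H p) = 1 \<and> (\<forall>D\<in>C - {V, H}. \<sigma> D (f D p) = i)"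
    if i: "i \<in> {1..\<kappa>}" for i
  proof -
    have one: "1 \<in> {1..\<kappa>}" using i by simp
    define p where "p = row V H i 1"
    have p: "p \<in> R" "f V p = i" "f H p = 1"
      using row[OF V H \<open>V \<noteq> H\<close> i one] by (simp_all add: p_def)
    have "row H D 1 (f D p) = p" if "D \<in> C - {V, H}" for D
      using row_eq[OF H _ _ p(1) p(3)] that by auto
    then have "\<forall>D\<in>C - {V, H}. \<sigma> D (f D p) = i"
      using p(2) by (simp add: \<sigma>_def)
    then show ?thesis using p by (auto simp: \<sigma>_def)
  qed
  then have "normalized_orthogonal_array \<kappa> R C (\<lambda>D p. \<sigma> D (f D p)) V H"
    using relabelled V H \<open>V \<noteq> H\<close>
    by (simp add: normalized_orthogonal_array_def normalized_orthogonal_array_axioms_def)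
  then show ?thesis by blast
qed

lemma obtain_two_distinct:
  assumes "2 \<le> card A"
  obtains a b where "a \<in> A" "b \<in> A" "a \<noteq> b"
  using assms card_le_Suc0_iff_eq[of A] by fastforce

locale projective_plane_of_order =
  fixes P :: "'a set" and L :: "'a set set" and \<kappa> :: nat
  assumes projective_plane: "finite_projective_plane P L" and order: "plane_order P L \<kappa>"
begin

lemma geometry: "geometry P L"
  and finite_points: "finite P"
  and lines_intersect: "l \<in> L \<Longrightarrow> m \<in> L \<Longrightarrow> l \<noteq> m \<Longrightarrow> l \<inter> m \<noteq> {}"
  and ex_quadrangle: "\<exists>Q. Q \<subseteq> P \<and> card Q = 4 \<and> (\<forall>l\<in>L. card (Q \<inter> l) \<le> 2)"
  using projective_plane unfolding finite_projective_plane_def by auto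

lemma line_subset: "l \<in> L \<Longrightarrow> l \<subseteq> P"
  using geometry unfolding geometry_def by auto

lemma finite_line: "l \<in> L \<Longrightarrow> finite l"
  using finite_subset[OF line_subset finite_points] .

lemma card_line: "l \<in> L \<Longrightarrow> card l = \<kappa> + 1"
  using order unfolding plane_order_def by auto

lemma ex1_line: "p \<in> P \<Longrightarrow> q \<in> P \<Longrightarrow> p \<noteq> q \<Longrightarrow> \<exists>!l. l \<in> L \<and> p \<in> l \<and> q \<in> l"
  using geometry unfolding geometry_def by auto

lemma line_eqI:
  assumes "l \<in> L" "m \<in> L" "p \<noteq> q" "p \<in> l" "q \<in> l" "p \<in> m" "q \<in> m"
  shows "l = m"
proof -
  have "p \<in> P" "q \<in> P" using assms(1,4,5) line_subset by blast+
  note ex1 = ex1_line[OF this assms(3)]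
  show ?thesis
    using the1_equality[OF ex1, of l] the1_equality[OF ex1, of m] assms by simp
qed

definition join :: "'a \<Rightarrow> 'a \<Rightarrow> 'a set" where
  "join p q = (THE l. l \<in> L \<and> p \<in> l \<and> q \<in> l)"

lemma join:
  assumes "p \<in> P" "q \<in> P" "p \<noteq> q"
  shows "join p q \<in> L" "p \<in> join p q" "q \<in> join p q"
  using theI'[OF ex1_line[OF assms]] unfolding join_def by auto

lemma join_eq:
  assumes "l \<in> L" "p \<in> l" "q \<in> l" "p \<noteq> q"
  shows "join p q = l"
proof -
  have "p \<in> P" "q \<in> P" using assms(1-3) line_subset by blast+
  note pq = join[OF this assms(4)]
  show ?thesis by (rule line_eqI[OF pq(1) assms(1,4) pq(2,3) assms(2,3)])
qed

definition meet :: "'a set \<Rightarrow> 'a set \<Rightarrow> 'a" where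
  "meet l m = (THE p. p \<in> l \<and> p \<in> m)"

lemma meet_eq:
  assumes "l \<in> L" "m \<in> L" "l \<noteq> m" "p \<in> l" "p \<in> m"
  shows "meet l m = p"
proof -
  have "q = p" if "q \<in> l" "q \<in> m" for q
    using line_eqI[OF assms(1,2), of q p] that assms(3-5) by blast
  then have "\<exists>!q. q \<in> l \<and> q \<in> m" using assms(4,5) by blast
  then show ?thesis
    unfolding meet_def by (rule the1_equality) (simp add: assms(4,5))
qed

lemma meet:
  assumes "l \<in> L" "m \<in> L" "l \<noteq> m"
  shows "meet l m \<in> l" "meet l m \<in> m"
proof -
  obtain p where "p \<in> l" "p \<in> m" using lines_intersect[OF assms] by blast
  with meet_eq[OF assms this] show "meet l m \<in> l" "meet l m \<in> m" by simp_all
qed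

lemma card_line_diff:
  assumes "l \<in> L" "m \<in> L" "l \<noteq> m"
  shows "card (m - l) = \<kappa>"
proof -
  have "m - l = m - {meet l m}"
    using meet[OF assms] meet_eq[OF assms] by blast
  then show ?thesis
    using card_line[OF assms(2)] finite_line[OF assms(2)] meet(2)[OF assms] by simp
qed

text \<open>The lines through \<open>E\<close> are labelled by where they cross a fixed line \<open>m\<close> not through
  \<open>E\<close>, whose points off \<open>l\<close> are enumerated by \<open>g\<close>.\<close>

definition pencil_index :: "'a \<Rightarrow> 'a set \<Rightarrow> (nat \<Rightarrow> 'a) \<Rightarrow> 'a \<Rightarrow> nat" where
  "pencil_index E m g p = inv_into {1..\<kappa>} g (meet (join E p) m)"

lemma pencil_index:
  assumes l: "l \<in> L" and E: "E \<in> l" and m: "m \<in> L" "m \<noteq> l" "E \<notin> m"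
    and g: "bij_betw g {1..\<kappa>} (m - l)" and p: "p \<in> P" "p \<notin> l"
  shows "pencil_index E m g p \<in> {1..\<kappa>}"
    and "i \<in> {1..\<kappa>} \<Longrightarrow> pencil_index E m g p = i \<longleftrightarrow> p \<in> join E (g i)"
proof -
  have EP: "E \<in> P" using E line_subset l by blast
  have "E \<noteq> p" using p E by blast
  note Ep = join[OF EP p(1) this]
  have "join E p \<noteq> m" using Ep(2) m(3) by blast
  have "join E p \<noteq> l" using Ep(3) p(2) by blast
  define z where "z = meet (join E p) m"
  have z: "z \<in> join E p" "z \<in> m" using meet[OF Ep(1) m(1) \<open>join E p \<noteq> m\<close>] z_def by auto
  have "z \<notin> l"
  proof
    assume "z \<in> l"
    have "z = E"
    proof (rule ccontr)
      assume "z \<noteq> E"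
      then have "join E p = l" using line_eqI[OF Ep(1) l _ z(1) Ep(2) \<open>z \<in> l\<close> E] by blast
      then show False using \<open>join E p \<noteq> l\<close> by simp
    qed
    then show False using z(2) m(3) by simp
  qed
  then have z_img: "z \<in> g ` {1..\<kappa>}" using g z unfolding bij_betw_def by auto
  then show "pencil_index E m g p \<in> {1..\<kappa>}"
    unfolding pencil_index_def z_def[symmetric] by (rule inv_into_into)
  assume i: "i \<in> {1..\<kappa>}"
  have gi: "g i \<in> m" "g i \<notin> l" using g i unfolding bij_betw_def by auto
  have "g i \<in> P" using gi(1) line_subset[OF m(1)] by blast
  have "E \<noteq> g i" using gi(1) m(3) by blast
  note Eg = join[OF EP \<open>g i \<in> P\<close> \<open>E \<noteq> g i\<close>]
  show "pencil_index E m g p = i \<longleftrightarrow> p \<in> join E (g i)"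
  proof
    assume "pencil_index E m g p = i"
    then have "g i = z"
      using f_inv_into_f[OF z_img] unfolding pencil_index_def z_def[symmetric] by simp
    then have "join E (g i) = join E p"
      using join_eq[OF Ep(1,2) z(1)] \<open>E \<noteq> g i\<close> by simp
    then show "p \<in> join E (g i)" using Ep(3) by simp
  next
    assume "p \<in> join E (g i)"
    then have "join E (g i) = join E p" using join_eq[OF Eg(1,2) _ \<open>E \<noteq> p\<close>] by simp
    then have "z = g i"
      unfolding z_def using meet_eq[OF Ep(1) m(1) \<open>join E p \<noteq> m\<close> _ gi(1)] Eg(3) by simp
    then show "pencil_index E m g p = i"
      using bij_betw_inv_into_left[OF g i] unfolding pencil_index_def z_def[symmetric] by simp
  qed
qed

lemma ex1_common_affine_point:
  assumes l: "l \<in> L" and EF: "E \<in> l" "F \<in> l" "E \<noteq> F"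
    and a: "a \<in> P" "a \<notin> l" and b: "b \<in> P" "b \<notin> l"
  shows "\<exists>!p. p \<in> P - l \<and> p \<in> join E a \<and> p \<in> join F b"
proof -
  have "E \<in> P" "F \<in> P" "E \<noteq> a" "F \<noteq> b" using EF a b line_subset[OF l] by blast+
  note Ea = join[OF \<open>E \<in> P\<close> a(1) \<open>E \<noteq> a\<close>] and Fb = join[OF \<open>F \<in> P\<close> b(1) \<open>F \<noteq> b\<close>]
  have "join E a \<noteq> l" "join F b \<noteq> l" using Ea(3) Fb(3) a b by blast+
  have "join E a \<noteq> join F b"
    using line_eqI[OF Ea(1) l EF(3) Ea(2)] Fb(2) EF \<open>join E a \<noteq> l\<close> by metis
  define p where "p = meet (join E a) (join F b)"
  have p: "p \<in> join E a" "p \<in> join F b"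
    using meet[OF Ea(1) Fb(1) \<open>join E a \<noteq> join F b\<close>] p_def by auto
  have "p \<in> P" using p Ea(1) line_subset by blast
  moreover have "p \<notin> l"
    using line_eqI[OF Ea(1) l, of E p] line_eqI[OF Fb(1) l, of F p] p Ea(2) Fb(2) EF
      \<open>join E a \<noteq> l\<close> \<open>join F b \<noteq> l\<close> by blast
  moreover have "q = p" if "q \<in> join E a" "q \<in> join F b" for q
    using line_eqI[OF Ea(1) Fb(1), of q p] that p \<open>join E a \<noteq> join F b\<close> by blast
  ultimately show ?thesis using p by blast
qed

lemma orthogonal_array_pencil_index:
  assumes l: "l \<in> L"
    and M: "\<And>E. E \<in> l \<Longrightarrow> M E \<in> L \<and> M E \<noteq> l \<and> E \<notin> M E \<and> bij_betw (G E) {1..\<kappa>} (M E - l)"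
  shows "orthogonal_array \<kappa> (P - l) l (\<lambda>E. pencil_index E (M E) (G E))"
proof
  fix E p assume "E \<in> l" "p \<in> P - l"
  then show "pencil_index E (M E) (G E) p \<in> {1..\<kappa>}"
    using pencil_index(1)[OF l _ _ _ _ _ _] M by blast
next
  fix E F i j assume EF: "E \<in> l" "F \<in> l" "E \<noteq> F" and ij: "i \<in> {1..\<kappa>}" "j \<in> {1..\<kappa>}"
  have G_affine: "G D k \<in> P" "G D k \<notin> l" if "D \<in> l" "k \<in> {1..\<kappa>}" for D k
    using M[OF that(1)] that(2) line_subset unfolding bij_betw_def by blast+
  have on_lines: "p \<in> P - l \<and> pencil_index E (M E) (G E) p = i \<and> pencil_index F (M F) (G F) p = j
      \<longleftrightarrow> p \<in> P - l \<and> p \<in> join E (G E i) \<and> p \<in> join F (G F j)" for p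
    using pencil_index(2)[OF l EF(1) _ _ _ _ _ _ ij(1)] pencil_index(2)[OF l EF(2) _ _ _ _ _ _ ij(2)]
      M[OF EF(1)] M[OF EF(2)] by blast
  show "\<exists>!p. p \<in> P - l \<and> pencil_index E (M E) (G E) p = i \<and> pencil_index F (M F) (G F) p = j"
    unfolding on_lines
    by (rule ex1_common_affine_point[OF l EF G_affine[OF EF(1) ij(1)] G_affine[OF EF(2) ij(2)]])
qed

lemma ex_line_avoiding:
  assumes l: "l \<in> L" and E: "E \<in> l" and p: "p \<in> P" "p \<notin> l"
  shows "\<exists>m. m \<in> L \<and> m \<noteq> l \<and> E \<notin> m"
proof -
  have "\<exists>a b. a \<noteq> b \<and> a \<in> l \<and> b \<in> l" using geometry l unfolding geometry_def by auto
  then obtain F where F: "F \<in> l" "F \<noteq> E" by metis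
  have "F \<in> P" "p \<noteq> F" using F l p line_subset by blast+
  note pF = join[OF p(1) this]
  have "join p F \<noteq> l" using pF(2) p(2) by blast
  moreover have "E \<notin> join p F"
  proof
    assume "E \<in> join p F"
    then have "join p F = l" using line_eqI[OF pF(1) l F(2) pF(3) _ F(1) E] by blast
    then show False using \<open>join p F \<noteq> l\<close> by simp
  qed
  ultimately show ?thesis using pF(1) by blast
qed

lemma ex_point_off_line: "\<exists>l p. l \<in> L \<and> p \<in> P \<and> p \<notin> l"
proof -
  obtain Q where Q: "Q \<subseteq> P" "card Q = 4" "\<forall>l\<in>L. card (Q \<inter> l) \<le> 2"
    using ex_quadrangle by blast
  have "2 \<le> card Q" using Q(2) by simp
  then obtain a b where ab: "a \<in> Q" "b \<in> Q" "a \<noteq> b" by (rule obtain_two_distinct)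
  then have l: "join a b \<in> L" using join(1)[OF _ _ ab(3)] Q(1) by blast
  have "\<not> Q \<subseteq> join a b"
  proof
    assume "Q \<subseteq> join a b"
    then have "Q \<inter> join a b = Q" by blast
    then show False using Q(2) Q(3)[rule_format, OF l] by simp
  qed
  then show ?thesis using l Q(1) by blast
qed

lemma ex_orthogonal_array: "\<exists>l (f :: 'a \<Rightarrow> 'a \<Rightarrow> nat). l \<in> L \<and> orthogonal_array \<kappa> (P - l) l f"
proof -
  obtain l p where l: "l \<in> L" and p: "p \<in> P" "p \<notin> l" using ex_point_off_line by blast
  have "\<forall>E\<in>l. \<exists>m. m \<in> L \<and> m \<noteq> l \<and> E \<notin> m" using ex_line_avoiding[OF l _ p] by blast
  from bchoice[OF this] obtain M where M: "\<forall>E\<in>l. M E \<in> L \<and> M E \<noteq> l \<and> E \<notin> M E"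
    by blast
  have "\<forall>E\<in>l. \<exists>g. bij_betw g {1..\<kappa>} (M E - l)"
  proof
    fix E assume "E \<in> l"
    then have "M E \<in> L" "M E \<noteq> l" using M by blast+
    then have "finite (M E - l)" "card (M E - l) = \<kappa>"
      using finite_line card_line_diff[OF l] by simp_all
    then show "\<exists>g. bij_betw g {1..\<kappa>} (M E - l)"
      using ex_bij_betw_nat_finite_1[of "M E - l"] by simp
  qed
  from bchoice[OF this] obtain G where G: "\<forall>E\<in>l. bij_betw (G E) {1..\<kappa>} (M E - l)"
    by blast
  have "orthogonal_array \<kappa> (P - l) l (\<lambda>E. pencil_index E (M E) (G E))"
    using orthogonal_array_pencil_index[OF l] M G by blast
  then show ?thesis using l by blast
qed

end

theorem mainTheorem1:
  fixes \<kappa> :: nat and P :: "'a set" and L :: "'a set set"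
  assumes "\<kappa> \<ge> 2"
    and "finite_projective_plane P L"
    and "plane_order P L \<kappa>"
  shows "\<exists>S. complete_MPLS \<kappa> S"
proof -
  interpret projective_plane_of_order P L \<kappa> using assms(2,3) by unfold_locales
  obtain l and f :: "'a \<Rightarrow> 'a \<Rightarrow> nat"
    where l: "l \<in> L" and array: "orthogonal_array \<kappa> (P - l) l f"
    using ex_orthogonal_array by blast
  have "2 \<le> card l" using card_line[OF l] assms(1) by simp
  then obtain V H where "V \<in> l" "H \<in> l" "V \<noteq> H" by (rule obtain_two_distinct)
  then obtain g where normalized: "normalized_orthogonal_array \<kappa> (P - l) l g V H"
    using orthogonal_array.ex_normalized[OF array] by blast
  show ?thesis
    by (rule normalized_orthogonal_array.ex_complete_MPLS[OF normalized assms(1)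
          finite_line[OF l] card_line[OF l]])
qed

end
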